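(* Let $d$ be a prime and let $c_0,\dots,c_7\in\mathbb{Z}_d$. The $d$-state first degree cellular automaton with parameters $\langle c_0,\dots,c_7\rangle$ is reversible for every number of cells $n\in\mathbb{N}$ under the null boundary condition if and only if $c_0=c_1=c_2=c_3=0$, at least one of $c_4=0$ or $c_6=0$ holds, and $\gcd(c_5,d)=1$ (i.e. $c_5\neq 0$); $c_7$ may be arbitrary.
   Context: Fix an integer $d\ge 2$ and the state set $S=\mathbb{Z}_d=\{0,1,\dots,d-1\}$. A first degree cellular automaton (FDCA) with parameters $\langle c_0,\dots,c_7\rangle$, $c_i\in\mathbb{Z}_d$, is the one-dimensional 3-neighborhood cellular automaton whose local rule $R:S^3\to S$ is $R(x,y,z)=c_0xyz+c_1xy+c_2xz+c_3yz+c_4x+c_5y+c_6z+c_7 \pmod d$. For $n\in\mathbb{N}$, $n\ge1$, the $n$-cell automaton under the null boundary condition acts on configurations $x=(x_0,\dots,x_{n-1})\in S^n$ by the global map $G_n:S^n\to S^n$, $G_n(x)_i=R(x_{i-1},x_i,x_{i+1})$ for $0\le i\le n-1$, with the convention $x_{-1}=x_n=0$. The automaton is reversible for a given $n$ if $G_n$ is a bijection. *)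

theory Defs
  imports "HOL-Computational_Algebra.Primes"
begin

text \<open>States are the naturals 0..d-1 representing Z_d. The parameter vector
  c0..c7 is a function c :: nat => nat, with c i in Z_d for i < 8.\<close>

definition fdca_rule :: "nat \<Rightarrow> (nat \<Rightarrow> nat) \<Rightarrow> nat \<Rightarrow> nat \<Rightarrow> nat \<Rightarrow> nat" where
  "fdca_rule d c x y z =
     (c 0 * x * y * z + c 1 * x * y + c 2 * x * z + c 3 * y * z
      + c 4 * x + c 5 * y + c 6 * z + c 7) mod d"

definition configs :: "nat \<Rightarrow> nat \<Rightarrow> nat list set" where
  "configs d n = {xs. length xs = n \<and> (\<forall>i<n. xs ! i < d)}"

definition cell :: "nat list \<Rightarrow> int \<Rightarrow> nat" where
  "cell xs i = (if 0 \<le> i \<and> i < int (length xs) then xs ! nat i else 0)"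

definition global_map :: "nat \<Rightarrow> (nat \<Rightarrow> nat) \<Rightarrow> nat list \<Rightarrow> nat list" where
  "global_map d c xs =
     map (\<lambda>i. fdca_rule d c (cell xs (int i - 1)) (cell xs (int i)) (cell xs (int i + 1)))
         [0..<length xs]"

definition reversible :: "nat \<Rightarrow> (nat \<Rightarrow> nat) \<Rightarrow> nat \<Rightarrow> bool" where
  "reversible d c n = bij_betw (global_map d c) (configs d n) (configs d n)"

end

theory Submission
  imports Defs "HOL-Number_Theory.Cong" "HOL-Combinatorics.Permutations"
begin

(* Reduction modulo d commutes with the automaton whose local rule is the integer polynomial
   R(x,y,z) = c0 xyz + c1 xy + c2 xz + c3 yz + c4 x + c5 y + c6 z + c7, so G_n is not injective
   as soon as two integer configurations that differ modulo d have images that agree modulo d.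
   As d is prime, such witnesses may be written with inverses modulo d.

   Necessity: one cell forces c5 to be a unit. Two cells force c3 = 0, and c1 = 0 follows by the
   mirror symmetry x_i -> x_(n-1-i), which exchanges c1 with c3 and c4 with c6. Three and four
   cells force c0 = c2 = 0. For the remaining linear rule with c4 and c6 both nonzero, the
   solution of c4 x_(i-1) + c5 x_i + c6 x_(i+1) = 0 with (x_(-1), x_0) = (0, 1) moves by an
   invertible map on the finite set Z_d^2, hence returns to (0, 1); the cells before the return
   form a nonzero configuration with the same image as the zero configuration.

   Sufficiency: if c6 = 0 the outputs determine the cells from left to right since c5 is a unit;
   the case c4 = 0 is the mirror image. *)

subsection \<open>Integer configurations\<close>

definition fdca_poly :: "(nat \<Rightarrow> nat) \<Rightarrow> int \<Rightarrow> int \<Rightarrow> int \<Rightarrow> int" where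
  "fdca_poly c x y z =
     int (c 0) * x * y * z + int (c 1) * x * y + int (c 2) * x * z + int (c 3) * y * z
     + int (c 4) * x + int (c 5) * y + int (c 6) * z + int (c 7)"

definition int_cell :: "int list \<Rightarrow> int \<Rightarrow> int" where
  "int_cell X i = (if 0 \<le> i \<and> i < int (length X) then X ! nat i else 0)"

definition int_global_map :: "(nat \<Rightarrow> nat) \<Rightarrow> int list \<Rightarrow> int list" where
  "int_global_map c X =
     map (\<lambda>i. fdca_poly c (int_cell X (int i - 1)) (int_cell X (int i)) (int_cell X (int i + 1)))
         [0..<length X]"

definition reduce_mod :: "nat \<Rightarrow> int list \<Rightarrow> nat list" where
  "reduce_mod d X = map (\<lambda>v. nat (v mod int d)) X"

lemma length_int_global_map [simp]: "length (int_global_map c X) = length X"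
  by (simp add: int_global_map_def)

lemma fdca_poly_mod:
  "fdca_poly c (x mod m) (y mod m) (z mod m) mod m = fdca_poly c x y z mod m"
  unfolding fdca_poly_def by (intro mod_add_cong mod_mult_cong; simp)

lemma int_fdca_rule: "int (fdca_rule d c x y z) = fdca_poly c (int x) (int y) (int z) mod int d"
  by (simp add: fdca_rule_def fdca_poly_def of_nat_mod)

lemma reduce_mod_in_configs: "d > 0 \<Longrightarrow> reduce_mod d X \<in> configs d (length X)"
  by (auto simp: reduce_mod_def configs_def nat_less_iff)

lemma int_cell_reduce_mod: "d > 0 \<Longrightarrow> int (cell (reduce_mod d X) i) = int_cell X i mod int d"
  by (auto simp: cell_def int_cell_def reduce_mod_def nat_less_iff)

lemma global_map_reduce_mod:
  assumes "d > 0"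
  shows "global_map d c (reduce_mod d X) = reduce_mod d (int_global_map c X)"
proof -
  have "int (fdca_rule d c (cell (reduce_mod d X) (i - 1)) (cell (reduce_mod d X) i)
          (cell (reduce_mod d X) (i + 1)))
        = fdca_poly c (int_cell X (i - 1)) (int_cell X i) (int_cell X (i + 1)) mod int d" for i
    using assms by (simp add: int_fdca_rule int_cell_reduce_mod fdca_poly_mod)
  then have "fdca_rule d c (cell (reduce_mod d X) (i - 1)) (cell (reduce_mod d X) i)
          (cell (reduce_mod d X) (i + 1))
        = nat (fdca_poly c (int_cell X (i - 1)) (int_cell X i) (int_cell X (i + 1)) mod int d)" for i
    by (metis nat_int)
  then show ?thesis
    by (simp add: global_map_def int_global_map_def reduce_mod_def)
qed

lemma reduce_mod_eq_iff:
  assumes "d > 0"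
  shows "reduce_mod d X = reduce_mod d Y \<longleftrightarrow> list_all2 (\<lambda>u v. [u = v] (mod int d)) X Y"
  using assms
  by (auto simp: reduce_mod_def list_all2_conv_all_nth list_eq_iff_nth_eq cong_def nat_eq_iff)

lemma not_reversible_if_collision:
  assumes "list_all2 (\<lambda>u v. [u = v] (mod int d)) (int_global_map c X) (int_global_map c Y)"
    and "\<not> list_all2 (\<lambda>u v. [u = v] (mod int d)) X Y"
    and "d > 0"
  shows "\<not> reversible d c (length X)"
proof
  assume "reversible d c (length X)"
  then have "inj_on (global_map d c) (configs d (length X))"
    by (simp add: reversible_def bij_betw_def)
  moreover have "length Y = length X"
    using assms(1) list_all2_lengthD by fastforce
  then have "reduce_mod d X \<in> configs d (length X)" "reduce_mod d Y \<in> configs d (length X)"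
    using reduce_mod_in_configs[OF assms(3)] by metis+
  moreover have "global_map d c (reduce_mod d X) = global_map d c (reduce_mod d Y)"
    using assms(1,3) by (simp add: global_map_reduce_mod reduce_mod_eq_iff)
  ultimately have "reduce_mod d X = reduce_mod d Y"
    by (blast dest: inj_onD)
  with assms(2,3) show False
    by (simp add: reduce_mod_eq_iff)
qed

lemma int_global_map_1: "int_global_map c [a] = [fdca_poly c 0 a 0]"
  by (simp add: int_global_map_def int_cell_def)

lemma int_global_map_2: "int_global_map c [a, b] = [fdca_poly c 0 a b, fdca_poly c a b 0]"
  by (simp add: int_global_map_def int_cell_def upt_rec)

lemma int_global_map_3:
  "int_global_map c [a, b, e] = [fdca_poly c 0 a b, fdca_poly c a b e, fdca_poly c b e 0]"
  by (simp add: int_global_map_def int_cell_def upt_rec)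

lemma int_global_map_4:
  "int_global_map c [a, b, e, f] =
     [fdca_poly c 0 a b, fdca_poly c a b e, fdca_poly c b e f, fdca_poly c e f 0]"
  by (simp add: int_global_map_def int_cell_def upt_rec nth_Cons')

subsection \<open>Mirror symmetry\<close>

definition mirror :: "(nat \<Rightarrow> nat) \<Rightarrow> nat \<Rightarrow> nat" where
  "mirror c = c(1 := c 3, 3 := c 1, 4 := c 6, 6 := c 4)"

lemma mirror_mirror [simp]: "mirror (mirror c) = c"
  by (auto simp: mirror_def)

lemma fdca_rule_mirror: "fdca_rule d (mirror c) x y z = fdca_rule d c z y x"
  by (simp add: fdca_rule_def mirror_def algebra_simps)

lemma cell_rev: "cell (rev xs) i = cell xs (int (length xs) - 1 - i)"
  by (auto simp: cell_def rev_nth nat_diff_distrib)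

lemma global_map_mirror: "global_map d (mirror c) (rev xs) = rev (global_map d c xs)"
proof (rule nth_equalityI)
  fix i assume "i < length (global_map d (mirror c) (rev xs))"
  then have i: "i < length xs" by (simp add: global_map_def)
  then have "int (length xs - Suc i) = int (length xs) - 1 - int i" by simp
  then show "global_map d (mirror c) (rev xs) ! i = rev (global_map d c xs) ! i"
    using i by (simp add: global_map_def rev_nth cell_rev fdca_rule_mirror algebra_simps)
qed (simp add: global_map_def)

lemma bij_betw_rev_configs: "bij_betw rev (configs d n) (configs d n)"
proof -
  have "rev xs \<in> configs d n" if "xs \<in> configs d n" for xs
    using that by (simp add: configs_def rev_nth)
  then show ?thesis
    by (intro bij_betw_byWitness[where f' = rev]) auto
qed

lemma reversible_mirror_imp:
  assumes "reversible d c n" shows "reversible d (mirror c) n"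
proof -
  have "global_map d (mirror c) = rev \<circ> global_map d c \<circ> rev"
    by (rule ext) (metis comp_apply global_map_mirror rev_rev_ident)
  then show ?thesis
    using assms bij_betw_rev_configs unfolding reversible_def by (metis bij_betw_trans)
qed

lemma reversible_mirror [simp]: "reversible d (mirror c) n \<longleftrightarrow> reversible d c n"
  using reversible_mirror_imp[of d c n] reversible_mirror_imp[of d "mirror c" n] by auto

subsection \<open>Sufficiency\<close>

lemma finite_configs: "finite (configs d n)"
proof -
  have "configs d n \<subseteq> {xs. set xs \<subseteq> {..<d} \<and> length xs = n}"
    by (auto simp: configs_def in_set_conv_nth)
  then show ?thesis
    using finite_lists_length_eq[of "{..<d}" n] by (simp add: finite_subset)
qed

lemma global_map_configs: "d > 0 \<Longrightarrow> global_map d c ` configs d n \<subseteq> configs d n"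
  by (auto simp: configs_def global_map_def fdca_rule_def)

lemma global_map_nth:
  "i < length xs \<Longrightarrow>
   global_map d c xs ! i = fdca_rule d c (cell xs (int i - 1)) (cell xs (int i)) (cell xs (int i + 1))"
  by (simp add: global_map_def)

lemma cell_nth: "i < length xs \<Longrightarrow> cell xs (int i) = xs ! i"
  by (simp add: cell_def)

lemma reversible_if_left_linear:
  assumes "d > 0" and "c 0 = 0" "c 1 = 0" "c 2 = 0" "c 3 = 0" "c 6 = 0" and "coprime (c 5) d"
  shows "reversible d c n"
proof -
  have "inj_on (global_map d c) (configs d n)"
  proof (rule inj_onI)
    fix xs ys
    assume xs: "xs \<in> configs d n" and ys: "ys \<in> configs d n"
      and eq: "global_map d c xs = global_map d c ys"
    have len: "length xs = n" "length ys = n"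
      using xs ys by (simp_all add: configs_def)
    have "\<forall>j<i. xs ! j = ys ! j" if "i \<le> n" for i
      using that
    proof (induction i)
      case (Suc i)
      then have prefix: "\<forall>j<i. xs ! j = ys ! j" and i: "i < n"
        by auto
      have left: "cell xs (int i - 1) = cell ys (int i - 1)"
        using prefix len i by (cases i) (simp_all add: cell_def)
      have "global_map d c xs ! i = global_map d c ys ! i"
        using eq by simp
      then have "(c 4 * cell xs (int i - 1) + c 5 * xs ! i + c 7) mod d
               = (c 4 * cell xs (int i - 1) + c 5 * ys ! i + c 7) mod d"
        using assms(2-6) len i left by (simp add: global_map_nth cell_nth fdca_rule_def)
      then have "[c 5 * xs ! i = c 5 * ys ! i] (mod d)"
        by (simp add: cong_def[symmetric] cong_add_lcancel_nat cong_add_rcancel_nat)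
      then have "[xs ! i = ys ! i] (mod d)"
        using assms(7) by (simp add: cong_mult_lcancel_nat)
      then have "xs ! i = ys ! i"
        using xs ys i by (auto simp: configs_def intro: cong_less_imp_eq_nat)
      with prefix show ?case
        by (auto simp: less_Suc_eq)
    qed simp
    from this[of n] show "xs = ys"
      using len by (simp add: list_eq_iff_nth_eq)
  qed
  then show ?thesis
    using endo_inj_surj[OF finite_configs global_map_configs[OF assms(1)]]
    by (simp add: reversible_def bij_betw_def)
qed

subsection \<open>Collisions on at most four cells\<close>

(* Below, every congruence between outputs is an identity in the ideal generated by d and the
   relations c * i - 1 for the inverses i in use; algebra finds the certificate. *)

lemma cong_inverse_prime:
  fixes p :: nat and a :: int
  assumes "prime p" and "\<not> int p dvd a"
  obtains i where "[a * i = 1] (mod int p)"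
proof -
  have "coprime (int p) a"
    using assms by (simp add: prime_imp_coprime)
  then show ?thesis
    using cong_solve_coprime_int that by (metis coprime_commute)
qed

lemma not_cong_add_one: "d \<ge> 2 \<Longrightarrow> \<not> [x = x + 1] (mod int d)"
  by (simp add: cong_iff_dvd_diff)

lemma reversible_1_imp_not_dvd_c5:
  assumes "d \<ge> 2" and "reversible d c 1"
  shows "\<not> d dvd c 5"
proof
  assume "d dvd c 5"
  then have "list_all2 (\<lambda>u v. [u = v] (mod int d)) (int_global_map c [0]) (int_global_map c [1])"
    by (simp add: int_global_map_1 fdca_poly_def cong_iff_dvd_diff)
  then have "\<not> reversible d c (length [0::int])"
    by (rule not_reversible_if_collision) (use assms(1) in \<open>simp_all add: cong_iff_dvd_diff\<close>)
  with assms(2) show False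
    by simp
qed

(* With a = -c6/c3 and b = -c5/c3 the first output does not change along the lines x0 = a and
   x1 = b, and the second output is affine on each of them. *)
lemma reversible_2_imp_dvd_c3:
  assumes "prime d" and "reversible d c 2"
  shows "d dvd c 3"
proof (rule ccontr)
  assume "\<not> d dvd c 3"
  then obtain i3 where i3: "[int (c 3) * i3 = 1] (mod int d)"
    using cong_inverse_prime[OF assms(1), of "int (c 3)"] by auto
  have d: "d \<ge> 2"
    using assms(1) prime_ge_2_nat by blast
  define a where "a = - int (c 6) * i3"
  define b where "b = - int (c 5) * i3"
  define \<gamma> where "\<gamma> = int (c 1) * a + int (c 5)"
  define \<delta> where "\<delta> = int (c 1) * b + int (c 4)"
  have "\<not> reversible d c 2"
  proof (cases "int d dvd \<gamma>")
    case True
    have "list_all2 (\<lambda>u v. [u = v] (mod int d))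
            (int_global_map c [a, b]) (int_global_map c [a, b + 1])"
      using i3 True
      unfolding int_global_map_2 list_all2_Cons list_all2_Nil cong_iff_dvd_diff fdca_poly_def
        a_def b_def \<gamma>_def
      by (intro conjI refl; algebra)
    then have "\<not> reversible d c (length [a, b])"
      by (rule not_reversible_if_collision) (use d not_cong_add_one in simp_all)
    then show ?thesis
      by (simp add: numeral_eq_Suc)
  next
    case False
    then obtain j where j: "[\<gamma> * j = 1] (mod int d)"
      by (rule cong_inverse_prime[OF assms(1)])
    have "list_all2 (\<lambda>u v. [u = v] (mod int d))
            (int_global_map c [a, b + j * \<delta>]) (int_global_map c [a + 1, b])"
      using i3 j
      unfolding int_global_map_2 list_all2_Cons list_all2_Nil cong_iff_dvd_diff fdca_poly_def
        a_def b_def \<gamma>_def \<delta>_def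
      by (intro conjI refl; algebra)
    then have "\<not> reversible d c (length [a, b + j * \<delta>])"
      by (rule not_reversible_if_collision) (use d not_cong_add_one in simp_all)
    then show ?thesis
      by (simp add: numeral_eq_Suc)
  qed
  with assms(2) show False
    by simp
qed

(* c0 b + c2 is the coefficient of x z in R(x, b, z). *)
lemma coupling_invertible:
  assumes "prime d" and "\<not> (d dvd c 0 \<and> d dvd c 2)"
  obtains b k where "[(int (c 0) * b + int (c 2)) * k = 1] (mod int d)"
proof (cases "d dvd c 0")
  case True
  then obtain i2 where "[int (c 2) * i2 = 1] (mod int d)"
    using assms cong_inverse_prime[OF assms(1), of "int (c 2)"] by auto
  then show ?thesis
    using that[of 0 i2] by simp
next
  case False
  then obtain i0 where i0: "[int (c 0) * i0 = 1] (mod int d)"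
    using cong_inverse_prime[OF assms(1), of "int (c 0)"] by auto
  have "[(int (c 0) * ((1 - int (c 2)) * i0) + int (c 2)) * 1 = 1] (mod int d)"
    using i0 unfolding cong_iff_dvd_diff by algebra
  then show ?thesis
    by (rule that)
qed

(* Shifting the outer cells by u = c6/c5 and v = c4/c5 compensates the increment of the middle
   cell in both outer outputs; z then equalises the middle output. *)
lemma not_reversible_3_if_coupled:
  assumes "prime d" and "d dvd c 1" "d dvd c 3" and "\<not> d dvd c 5" "\<not> d dvd c 6"
    and "\<not> (d dvd c 0 \<and> d dvd c 2)"
  shows "\<not> reversible d c 3"
proof -
  have d: "d \<ge> 2"
    using assms(1) prime_ge_2_nat by blast
  obtain i5 where i5: "[int (c 5) * i5 = 1] (mod int d)"
    using cong_inverse_prime[OF assms(1), of "int (c 5)"] assms(4) by auto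
  obtain i6 where i6: "[int (c 6) * i6 = 1] (mod int d)"
    using cong_inverse_prime[OF assms(1), of "int (c 6)"] assms(5) by auto
  obtain b k where k: "[(int (c 0) * b + int (c 2)) * k = 1] (mod int d)"
    using coupling_invertible[OF assms(1,6)] by blast
  define u where "u = int (c 6) * i5"
  define v where "v = int (c 4) * i5"
  define z where "z = k * (int (c 5) - 2 * int (c 4) * int (c 6) * i5) * int (c 5) * i6"
  have "int d dvd int (c 1)" "int d dvd int (c 3)"
    using assms(2,3) by simp_all
  then have "list_all2 (\<lambda>x y. [x = y] (mod int d))
               (int_global_map c [u, b, z]) (int_global_map c [0, b + 1, z - v])"
    using i5 i6 k
    unfolding int_global_map_3 list_all2_Cons list_all2_Nil cong_iff_dvd_diff fdca_poly_def
      u_def v_def z_def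
    by (intro conjI refl; algebra)
  then have "\<not> reversible d c (length [u, b, z])"
    by (rule not_reversible_if_collision) (use d not_cong_add_one in simp_all)
  then show ?thesis
    by (simp add: numeral_eq_Suc)
qed

lemma not_reversible_3_if_c0:
  assumes "prime d" and "d dvd c 1" "d dvd c 3" "d dvd c 4" "d dvd c 6" and "\<not> d dvd c 0"
  shows "\<not> reversible d c 3"
proof -
  have d: "d \<ge> 2"
    using assms(1) prime_ge_2_nat by blast
  obtain i0 where i0: "[int (c 0) * i0 = 1] (mod int d)"
    using cong_inverse_prime[OF assms(1), of "int (c 0)"] assms(6) by auto
  define z where "z = - int (c 5) * i0"
  have "int d dvd int (c 1)" "int d dvd int (c 3)" "int d dvd int (c 4)" "int d dvd int (c 6)"
    using assms(2-5) by simp_all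
  then have "list_all2 (\<lambda>x y. [x = y] (mod int d))
               (int_global_map c [1, 0, z]) (int_global_map c [1, 1, z])"
    using i0
    unfolding int_global_map_3 list_all2_Cons list_all2_Nil cong_iff_dvd_diff fdca_poly_def z_def
    by (intro conjI refl; algebra)
  then have "\<not> reversible d c (length [1, 0, z])"
    by (rule not_reversible_if_collision) (use d not_cong_add_one[of d 0] in simp_all)
  then show ?thesis
    by (simp add: numeral_eq_Suc)
qed

(* Here R = c2 x z + c5 y + c7; for outer cells 1 and (c5/c2)^2 the two middle outputs are a
   singular linear system in the middle cells, with kernel (c2, -c5). *)
lemma not_reversible_4_if_c2:
  assumes "prime d" and "d dvd c 0" "d dvd c 1" "d dvd c 3" "d dvd c 4" "d dvd c 6"
    and "\<not> d dvd c 2"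
  shows "\<not> reversible d c 4"
proof -
  obtain i2 where i2: "[int (c 2) * i2 = 1] (mod int d)"
    using cong_inverse_prime[OF assms(1), of "int (c 2)"] assms(7) by auto
  define e where "e = (int (c 5) * i2) ^ 2"
  have "int d dvd int (c 0)" "int d dvd int (c 1)" "int d dvd int (c 3)"
       "int d dvd int (c 4)" "int d dvd int (c 6)"
    using assms(2-6) by simp_all
  then have "list_all2 (\<lambda>x y. [x = y] (mod int d))
               (int_global_map c [1, 0, 0, e]) (int_global_map c [1, int (c 2), - int (c 5), e])"
    using i2
    unfolding int_global_map_4 list_all2_Cons list_all2_Nil cong_iff_dvd_diff fdca_poly_def e_def
    by (intro conjI refl; algebra)
  then have "\<not> reversible d c (length [1, 0, 0, e])"
    by (rule not_reversible_if_collision)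
      (use assms(1,7) prime_gt_0_nat in \<open>simp_all add: cong_iff_dvd_diff\<close>)
  then show ?thesis
    by (simp add: numeral_eq_Suc)
qed

lemma reversible_imp_dvd_c0_c2:
  assumes "prime d" and rev3: "reversible d c 3" and rev4: "reversible d c 4"
    and "d dvd c 1" "d dvd c 3" "\<not> d dvd c 5"
  shows "d dvd c 0 \<and> d dvd c 2"
proof (rule ccontr)
  assume coupled: "\<not> (d dvd c 0 \<and> d dvd c 2)"
  consider "\<not> d dvd c 6" | "\<not> d dvd c 4" | "d dvd c 4" "d dvd c 6"
    by blast
  then show False
  proof cases
    case 1
    with assms(1,4-6) coupled rev3 show False
      using not_reversible_3_if_coupled by blast
  next
    case 2
    have "\<not> reversible d (mirror c) 3"
      by (rule not_reversible_3_if_coupled)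
        (use assms(1,4-6) 2 coupled in \<open>simp_all add: mirror_def\<close>)
    with rev3 show False
      by simp
  next
    case 3
    with assms(1,4,5) coupled rev3 rev4 show False
      using not_reversible_3_if_c0 not_reversible_4_if_c2 by blast
  qed
qed

subsection \<open>Linear rules depending on both neighbours\<close>

lemma funpow_returns_finite:
  assumes "finite A" and "inj_on f A" and "f ` A \<subseteq> A" and "x \<in> A"
  obtains n where "n > 0" and "(f ^^ n) x = x"
proof -
  define g where "g y = (if y \<in> A then f y else y)" for y
  have "bij_betw f A A"
    using endo_inj_surj[OF assms(1,3,2)] assms(2) by (simp add: bij_betw_def)
  then have "bij_betw g A A"
    by (rule bij_betw_cong[THEN iffD1, rotated]) (simp add: g_def)
  then have "g permutes A"
    by (rule bij_imp_permutes) (simp add: g_def)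
  then have "permutation g"
    using assms(1) permutation_permutes by blast
  then obtain n where "n > 0" "(g ^^ n) x = x"
    by (rule permutation_self)
  moreover have "(g ^^ k) x = (f ^^ k) x \<and> (f ^^ k) x \<in> A" for k
    by (induction k) (use assms(3,4) in \<open>auto simp: g_def\<close>)
  ultimately show ?thesis
    using that by metis
qed

lemma recurrence_returns_to_zero:
  fixes D \<alpha> \<beta> \<gamma> :: int
  assumes "D \<ge> 2" and "coprime \<alpha> D" and "coprime \<gamma> D"
  obtains p and u :: "nat \<Rightarrow> int" where "p \<ge> 2" and "u 0 = 0" "u 1 = 1" "u p = 0"
    and "\<forall>k. [\<alpha> * u k + \<beta> * u (Suc k) + \<gamma> * u (Suc (Suc k)) = 0] (mod D)"
proof -
  obtain i where i: "[\<gamma> * i = 1] (mod D)"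
    using cong_solve_coprime_int[OF assms(3)] by blast
  define step where "step = (\<lambda>(a, b). (b, - (\<alpha> * a + \<beta> * b) * i mod D))"
  define A where "A = {0..<D} \<times> {0..<D}"
  have step_A: "step ` A \<subseteq> A"
    using assms(1) by (auto simp: step_def A_def)
  have "inj_on step A"
  proof (rule inj_onI)
    fix z w
    assume "z \<in> A" "w \<in> A" "step z = step w"
    moreover obtain a b a' b' where zw: "z = (a, b)" "w = (a', b')"
      by fastforce
    ultimately have range: "0 \<le> a" "a < D" "0 \<le> a'" "a' < D" and "b = b'"
      and second: "[- (\<alpha> * a + \<beta> * b) * i = - (\<alpha> * a' + \<beta> * b) * i] (mod D)"
      by (auto simp: A_def step_def cong_def)
    from second i have "[\<alpha> * a = \<alpha> * a'] (mod D)"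
      unfolding cong_iff_dvd_diff by algebra
    then have "a = a'"
      using range assms(2) by (simp add: cong_mult_lcancel cong_less_imp_eq_int)
    with zw \<open>b = b'\<close> show "z = w"
      by simp
  qed
  moreover have "finite A" "(0, 1) \<in> A"
    using assms(1) by (simp_all add: A_def)
  ultimately obtain p where "p > 0" and period: "(step ^^ p) (0, 1) = (0, 1)"
    using funpow_returns_finite step_A by metis
  define u where "u k = fst ((step ^^ k) (0, 1))" for k
  have state: "(step ^^ k) (0, 1) = (u k, u (Suc k))" for k
    by (cases "(step ^^ k) (0, 1)") (simp add: u_def step_def)
  have "\<forall>k. [\<alpha> * u k + \<beta> * u (Suc k) + \<gamma> * u (Suc (Suc k)) = 0] (mod D)"
  proof
    fix k
    have "u (Suc (Suc k)) = - (\<alpha> * u k + \<beta> * u (Suc k)) * i mod D"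
      using state[of "Suc k"] state[of k] by (simp add: step_def)
    then have "[u (Suc (Suc k)) = - (\<alpha> * u k + \<beta> * u (Suc k)) * i] (mod D)"
      by (simp add: cong_def)
    with i show "[\<alpha> * u k + \<beta> * u (Suc k) + \<gamma> * u (Suc (Suc k)) = 0] (mod D)"
      unfolding cong_iff_dvd_diff by algebra
  qed
  moreover have "u 0 = 0" "u 1 = 1" "u p = 0"
    using state[of 0] period by (simp_all add: u_def)
  moreover have "p \<ge> 2"
    using \<open>p > 0\<close> \<open>u 1 = 1\<close> \<open>u p = 0\<close> by (cases "p = 1") auto
  ultimately show ?thesis
    by (intro that)
qed

lemma not_reversible_if_two_sided_linear:
  assumes "prime d" and "d dvd c 0" "d dvd c 1" "d dvd c 2" "d dvd c 3"
    and "\<not> d dvd c 4" "\<not> d dvd c 6"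
  shows "\<exists>n\<ge>1. \<not> reversible d c n"
proof -
  have d: "d \<ge> 2"
    using assms(1) prime_ge_2_nat by blast
  have "int d \<ge> 2"
    using d by simp
  moreover have "coprime (int (c 4)) (int d)" "coprime (int (c 6)) (int d)"
    using assms(1,6,7) prime_imp_coprime by (simp_all add: coprime_commute)
  ultimately obtain p u where "p \<ge> 2" "u 0 = 0" "u 1 = 1" "u p = 0"
    and recurrence: "\<forall>k. [int (c 4) * u k + int (c 5) * u (Suc k)
                              + int (c 6) * u (Suc (Suc k)) = 0] (mod int d)"
    by (rule recurrence_returns_to_zero[where \<beta> = "int (c 5)"])
  define X where "X = map u [1..<p]"
  have cell: "int_cell X j = u (nat (j + 1))" if "-1 \<le> j" "j \<le> int p - 1" for j
  proof (cases "0 \<le> j \<and> j < int p - 1")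
    case True
    moreover have "nat j < p - 1"
      using True \<open>p \<ge> 2\<close> by (simp add: nat_less_iff of_nat_diff)
    ultimately show ?thesis
      using \<open>p \<ge> 2\<close> by (simp add: int_cell_def X_def nat_add_distrib)
  next
    case False
    with that have "j = -1 \<or> j = int p - 1"
      by linarith
    with False \<open>u 0 = 0\<close> \<open>u p = 0\<close> \<open>p \<ge> 2\<close> show ?thesis
      by (auto simp: int_cell_def X_def)
  qed
  have "int d dvd int (c 0)" "int d dvd int (c 1)" "int d dvd int (c 2)" "int d dvd int (c 3)"
    using assms(2-5) by simp_all
  then have "[fdca_poly c (u i) (u (Suc i)) (u (Suc (Suc i))) = fdca_poly c 0 0 0] (mod int d)"
    for i
    using recurrence[rule_format, of i] unfolding cong_iff_dvd_diff fdca_poly_def by algebra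
  moreover have "int_global_map c X ! i = fdca_poly c (u i) (u (Suc i)) (u (Suc (Suc i)))"
    if "i < p - 1" for i
  proof -
    have "int_cell X (int i - 1) = u i" "int_cell X (int i) = u (Suc i)"
      "int_cell X (int i + 1) = u (Suc (Suc i))"
      using cell[of "int i - 1"] cell[of "int i"] cell[of "int i + 1"] that
      by (simp_all add: nat_add_distrib)
    moreover have "length X = p - 1"
      by (simp add: X_def)
    ultimately show ?thesis
      using that by (simp add: int_global_map_def)
  qed
  moreover have "int_global_map c (replicate (p - 1) 0) ! i = fdca_poly c 0 0 0"
    if "i < p - 1" for i
  proof -
    have "int_cell (replicate n 0) j = 0" for n j
      by (simp add: int_cell_def nat_less_iff)
    then show ?thesis
      using that by (simp add: int_global_map_def)
  qed
  ultimately have "list_all2 (\<lambda>x y. [x = y] (mod int d))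
               (int_global_map c X) (int_global_map c (replicate (p - 1) 0))"
    by (simp add: list_all2_conv_all_nth X_def)
  moreover have "\<not> list_all2 (\<lambda>x y. [x = y] (mod int d)) X (replicate (p - 1) 0)"
  proof
    assume "list_all2 (\<lambda>x y. [x = y] (mod int d)) X (replicate (p - 1) 0)"
    from list_all2_nthD[OF this, of 0] have "[u 1 = 0] (mod int d)"
      using \<open>p \<ge> 2\<close> by (simp add: X_def)
    with \<open>u 1 = 1\<close> show False
      using not_cong_add_one[OF d, of 0] by (simp add: cong_sym_eq)
  qed
  ultimately have "\<not> reversible d c (length X)"
    using not_reversible_if_collision d by simp
  then show ?thesis
    using \<open>p \<ge> 2\<close> by (intro exI[of _ "p - 1"]) (simp add: X_def)
qed

lemma reversible_imp_coefficients:
  assumes "prime d" and all_reversible: "\<forall>n\<ge>1. reversible d c n"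
  shows "d dvd c 0 \<and> d dvd c 1 \<and> d dvd c 2 \<and> d dvd c 3 \<and> (d dvd c 4 \<or> d dvd c 6)
         \<and> coprime (c 5) d"
proof -
  have c5: "\<not> d dvd c 5"
    using reversible_1_imp_not_dvd_c5 assms(1) prime_ge_2_nat all_reversible by blast
  have c3: "d dvd c 3"
    using reversible_2_imp_dvd_c3[OF assms(1)] all_reversible by simp
  have "d dvd mirror c 3"
    using reversible_2_imp_dvd_c3[OF assms(1), of "mirror c"] all_reversible by simp
  then have c1: "d dvd c 1"
    by (simp add: mirror_def)
  have c02: "d dvd c 0 \<and> d dvd c 2"
    using reversible_imp_dvd_c0_c2[OF assms(1) _ _ c1 c3 c5] all_reversible by simp
  then have "d dvd c 4 \<or> d dvd c 6"
    using not_reversible_if_two_sided_linear[OF assms(1)] c1 c3 all_reversible by blast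
  moreover have "coprime (c 5) d"
    using prime_imp_coprime[OF assms(1) c5] by (simp add: ac_simps)
  ultimately show ?thesis
    using c02 c1 c3 by blast
qed

lemma reversible_if_coefficients:
  assumes "d > 0" and "c 0 = 0" "c 1 = 0" "c 2 = 0" "c 3 = 0" and "c 4 = 0 \<or> c 6 = 0"
    and "coprime (c 5) d"
  shows "reversible d c n"
  using assms(6)
proof
  assume "c 4 = 0"
  then have "reversible d (mirror c) n"
    using assms by (simp add: reversible_if_left_linear mirror_def)
  then show ?thesis
    by simp
next
  assume "c 6 = 0"
  then show ?thesis
    using assms by (simp add: reversible_if_left_linear)
qed

theorem corollary1:
  fixes d :: nat and c :: "nat \<Rightarrow> nat"
  assumes "prime d"
    and "\<forall>i<8. c i < d"
  shows "(\<forall>n\<ge>1. reversible d c n) \<longleftrightarrow>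
         (c 0 = 0 \<and> c 1 = 0 \<and> c 2 = 0 \<and> c 3 = 0 \<and> (c 4 = 0 \<or> c 6 = 0)
          \<and> gcd (c 5) d = 1)"
proof
  have dvd_iff: "d dvd c i \<longleftrightarrow> c i = 0" if "i < 8" for i
    using assms(2) that nat_dvd_not_less by fastforce
  assume "\<forall>n\<ge>1. reversible d c n"
  from reversible_imp_coefficients[OF assms(1) this]
  show "c 0 = 0 \<and> c 1 = 0 \<and> c 2 = 0 \<and> c 3 = 0 \<and> (c 4 = 0 \<or> c 6 = 0) \<and> gcd (c 5) d = 1"
    by (simp add: dvd_iff coprime_iff_gcd_eq_1[symmetric])
next
  assume "c 0 = 0 \<and> c 1 = 0 \<and> c 2 = 0 \<and> c 3 = 0 \<and> (c 4 = 0 \<or> c 6 = 0) \<and> gcd (c 5) d = 1"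
  with reversible_if_coefficients[of d c] prime_gt_0_nat[OF assms(1)]
  show "\<forall>n\<ge>1. reversible d c n"
    by (simp add: coprime_iff_gcd_eq_1)
qed

end
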